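(* Let $Y\subset\mathbb{R}^2$ be a finite point set in general position. Let $w_1$ and $w_2$ be two points of $\mathrm{Vor}_Q(Y)$, each a Voronoi edge bend or a Voronoi vertex, that are adjacent along a Voronoi edge of $\mathrm{Vor}_Q(Y)$ (i.e., consecutive bends/vertices on that edge). Then for every point $x$ on the segment $w_1w_2$, we have $Q^*_x\subseteq Q^*_{w_1}\cup Q^*_{w_2}$. The same conclusion holds if $w_1$ and $w_2$ are the two Voronoi vertices that are the endpoints of a Voronoi edge $e$ of $\mathrm{Vor}_Q(Y)$ and $x$ is any point on $e$.
   Context: Let $Q\subset\mathbb{R}^2$ be a convex polygon with a constant number of vertices containing the origin in its interior. For $x,y\in\mathbb{R}^2$, $d_Q(x,y)=\min\{\lambda\ge 0: y\in\lambda Q+x\}$. Let $Q^*=\{-x:x\in Q\}$, so $d_{Q^*}(x,y)=d_Q(y,x)$. For a finite set $Y$ and $p\in Y$, the Voronoi cell is $V_p(Y)=\{x\in\mathbb{R}^2: d_Q(p,x)\le d_Q(q,x)\ \forall q\in Y\}$, and $\mathrm{Vor}_Q(Y)$ is the subdivision of the plane into these cells. Each Voronoi edge (common boundary of two cells) is a polygonal curve; its interior vertices are called Voronoi edge bends. For $x\in\mathbb{R}^2$, $Q^*_x$ denotes the largest homothetic copy $\lambda Q^*+x$ ($\lambda\ge 0$) of $Q^*$ centered at $x$ such that $\mathrm{int}(Q^*_x)\cap Y=\emptyset$. General position means: no two sides of $Q$ are parallel; no line through two points of $Y$ is parallel to a side of $Q$; no four points of $Y$ lie on the boundary of a homothetic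 copy of $Q^*$. *)

theory Defs
  imports "HOL-Analysis.Analysis"
begin

definition cross2 :: "real^2 \<Rightarrow> real^2 \<Rightarrow> real" where
  "cross2 u v = u$1 * v$2 - u$2 * v$1"

definition parallel_dir :: "real^2 \<Rightarrow> real^2 \<Rightarrow> real^2 \<Rightarrow> real^2 \<Rightarrow> bool" where
  "parallel_dir a b c d \<longleftrightarrow> cross2 (b - a) (d - c) = 0"

definition homothet :: "(real^2) set \<Rightarrow> real \<Rightarrow> real^2 \<Rightarrow> (real^2) set" where
  "homothet S lam c = (\<lambda>s. c + lam *\<^sub>R s) ` S"

definition reflect :: "(real^2) set \<Rightarrow> (real^2) set" where
  "reflect Q = uminus ` Q"

definition dQ :: "(real^2) set \<Rightarrow> real^2 \<Rightarrow> real^2 \<Rightarrow> real" where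
  "dQ Q x y = Inf {lam. 0 \<le> lam \<and> y \<in> homothet Q lam x}"

definition vcell :: "(real^2) set \<Rightarrow> (real^2) set \<Rightarrow> real^2 \<Rightarrow> (real^2) set" where
  "vcell Q Y p = {x. \<forall>q\<in>Y. dQ Q p x \<le> dQ Q q x}"

definition voronoi_edge :: "(real^2) set \<Rightarrow> (real^2) set \<Rightarrow> (real^2) set \<Rightarrow> bool" where
  "voronoi_edge Q Y e \<longleftrightarrow>
     (\<exists>p\<in>Y. \<exists>q\<in>Y. p \<noteq> q \<and> e = vcell Q Y p \<inter> vcell Q Y q) \<and>
     (\<exists>a\<in>e. \<exists>b\<in>e. a \<noteq> b)"

definition voronoi_vertex :: "(real^2) set \<Rightarrow> (real^2) set \<Rightarrow> real^2 \<Rightarrow> bool" where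
  "voronoi_vertex Q Y x \<longleftrightarrow> card {p\<in>Y. x \<in> vcell Q Y p} \<ge> 3"

text \<open>Bend of a polygonal curve e: a point of e near which e is not contained
  in a line (i.e. an interior vertex of the polygonal curve).\<close>
definition edge_bend :: "(real^2) set \<Rightarrow> real^2 \<Rightarrow> bool" where
  "edge_bend e w \<longleftrightarrow> w \<in> e \<and> (\<forall>r>0. \<not> collinear (e \<inter> ball w r))"

definition curve_endpoint :: "(real^2) set \<Rightarrow> real^2 \<Rightarrow> bool" where
  "curve_endpoint e w \<longleftrightarrow> w \<in> e \<and> connected (e - {w})"

definition special_pts :: "(real^2) set \<Rightarrow> (real^2) set \<Rightarrow> (real^2) set \<Rightarrow> (real^2) set" where
  "special_pts Q Y e = {w\<in>e. edge_bend e w \<or> voronoi_vertex Q Y w}"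

definition adjacent_on_edge ::
  "(real^2) set \<Rightarrow> (real^2) set \<Rightarrow> (real^2) set \<Rightarrow> real^2 \<Rightarrow> real^2 \<Rightarrow> bool" where
  "adjacent_on_edge Q Y e w1 w2 \<longleftrightarrow>
     w1 \<in> special_pts Q Y e \<and> w2 \<in> special_pts Q Y e \<and> w1 \<noteq> w2 \<and>
     closed_segment w1 w2 \<subseteq> e \<and> open_segment w1 w2 \<inter> special_pts Q Y e = {}"

definition Qstar_at :: "(real^2) set \<Rightarrow> (real^2) set \<Rightarrow> real^2 \<Rightarrow> (real^2) set" where
  "Qstar_at Q Y x = homothet (reflect Q)
     (Sup {lam. 0 \<le> lam \<and> interior (homothet (reflect Q) lam x) \<inter> Y = {}}) x"

definition side_of :: "(real^2) set \<Rightarrow> (real^2) set \<Rightarrow> bool" where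
  "side_of F Q \<longleftrightarrow> F face_of Q \<and> aff_dim F = 1"

definition general_position :: "(real^2) set \<Rightarrow> (real^2) set \<Rightarrow> bool" where
  "general_position Q Y \<longleftrightarrow>
     (\<forall>F1 F2. side_of F1 Q \<longrightarrow> side_of F2 Q \<longrightarrow> F1 \<noteq> F2 \<longrightarrow>
        (\<forall>a\<in>F1. \<forall>b\<in>F1. \<forall>c\<in>F2. \<forall>d\<in>F2. a \<noteq> b \<longrightarrow> c \<noteq> d \<longrightarrow> \<not> parallel_dir a b c d)) \<and>
     (\<forall>y1\<in>Y. \<forall>y2\<in>Y. y1 \<noteq> y2 \<longrightarrow> (\<forall>F. side_of F Q \<longrightarrow>
        (\<forall>a\<in>F. \<forall>b\<in>F. a \<noteq> b \<longrightarrow> \<not> parallel_dir y1 y2 a b))) \<and>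
     (\<forall>lam>0. \<forall>c. card (Y \<inter> frontier (homothet (reflect Q) lam c)) \<le> 3)"

end

theory Submission
  imports Defs
begin

text \<open>Write Q = {v. \<forall>a\<in>A. a \<bullet> v \<le> 1} for a finite set A of facet normals. Then
  d_Q(y, x) = \<gamma> (x - y) for the gauge \<gamma> v = max_a a \<bullet> v, and for a point x of the
  bisector of two sites p, q nearest to x, Q*_x is the disk
  disk x = {z. \<gamma> (x - z) \<le> \<gamma> (x - p)}, a homothet of -Q through p and q.

  By general position no side of Q is parallel to pq, so every such disk meets the line pq
  exactly in the segment pq. For two disks, the homothety mapping one onto the other sends
  p, q into it and translates off the line pq; convexity then shows that on one side of pq
  the first disk lies in the second and on the other side the second lies in the first.
  Thus the disks centred on the bisector are totally ordered, and the sum of the two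
  extreme heights of a disk over the line pq is a continuous parameter along the bisector
  that is monotone and, again by general position, injective. On a connected piece of a
  Voronoi edge whose two ends do not disconnect it, the parameter at any point lies between
  its values at the ends, and the order gives Q*_x \<subseteq> Q*_w1 \<union> Q*_w2.\<close>

section \<open>Planar cross product\<close>

lemma cross2_add_right: "cross2 u (v + w) = cross2 u v + cross2 u w"
  and cross2_diff_right: "cross2 u (v - w) = cross2 u v - cross2 u w"
  and cross2_minus_right: "cross2 u (- v) = - cross2 u v"
  and cross2_scaleR_right: "cross2 u (c *\<^sub>R v) = c * cross2 u v"
  and cross2_self: "cross2 u u = 0"
  by (simp_all add: cross2_def algebra_simps)

lemmas cross2_simps =
  cross2_add_right cross2_diff_right cross2_minus_right cross2_scaleR_right cross2_self

lemma continuous_on_cross2: "continuous_on S (cross2 u)"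
  unfolding cross2_def by (intro continuous_intros)

lemma vec2_eq_0_iff: "(u :: real^2) = 0 \<longleftrightarrow> u$1 = 0 \<and> u$2 = 0"
  by (simp add: vec_eq_iff forall_2)

lemma cross2_eq_0_imp_parallel:
  assumes "u \<noteq> 0" "cross2 u v = 0"
  obtains s where "v = s *\<^sub>R u"
proof (cases "u$1 = 0")
  case True
  then have "u$2 \<noteq> 0" using assms(1) by (simp add: vec2_eq_0_iff)
  then have "v = (v$2 / u$2) *\<^sub>R u"
    using True assms(2) by (simp add: cross2_def vec_eq_iff forall_2)
  then show ?thesis by (rule that)
next
  case False
  then have "v = (v$1 / u$1) *\<^sub>R u"
    using assms(2) by (simp add: cross2_def vec_eq_iff forall_2 field_simps)
  then show ?thesis by (rule that)
qed

text \<open>Cramer's rule.\<close>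
lemma cross2_coordinates:
  assumes "cross2 u w \<noteq> 0"
  shows "v = (cross2 v w / cross2 u w) *\<^sub>R u + (cross2 u v / cross2 u w) *\<^sub>R w"
proof -
  have "cross2 u w *\<^sub>R v = cross2 v w *\<^sub>R u + cross2 u v *\<^sub>R w"
    by (simp add: cross2_def vec_eq_iff forall_2 algebra_simps)
  then have "v = (1 / cross2 u w) *\<^sub>R (cross2 v w *\<^sub>R u + cross2 u v *\<^sub>R w)"
    using assms by (metis divide_self_if mult_1 scaleR_scaleR times_divide_eq_left scaleR_one)
  then show ?thesis by (simp add: scaleR_add_right)
qed

section \<open>Homotheties of convex sets\<close>

lemma mem_reflect_iff: "v \<in> reflect S \<longleftrightarrow> - v \<in> S"
  unfolding reflect_def by force

lemma mem_homothet_iff: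
  assumes "lam > 0"
  shows "z \<in> homothet S lam x \<longleftrightarrow> (1 / lam) *\<^sub>R (z - x) \<in> S"
proof -
  have "z = x + lam *\<^sub>R s \<longleftrightarrow> s = (1 / lam) *\<^sub>R (z - x)" for s
    using assms by auto
  then show ?thesis unfolding homothet_def using assms by auto
qed

lemma homothet_0: "homothet S 0 x = (if S = {} then {} else {x})"
  by (auto simp: homothet_def)

text \<open>In coordinates with respect to p, d, e: the trapezoid with vertices (0,0), (1,0),
  (0,1), (\<kappa>,1) and a point (a,b) below it, subject to the stated bounds, span the point
  (\<kappa> a, 1 + \<kappa> b).\<close>
lemma convex_trapezoid_point:
  fixes C :: "'a::real_vector set"
  assumes "convex C" "p \<in> C" "p + d \<in> C" "p + e \<in> C" "p + \<kappa> *\<^sub>R d + e \<in> C"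
    and w: "p + a *\<^sub>R d + b *\<^sub>R e \<in> C"
    and "\<kappa> > 0" "b \<le> 0" "0 \<le> a" "a \<le> 1 + (\<kappa> - 1) * b"
  shows "p + (\<kappa> * a) *\<^sub>R d + (1 + \<kappa> * b) *\<^sub>R e \<in> C"
proof -
  define D where "D = 1 + (\<kappa> - 1) * b"
  define \<mu> where "\<mu> = a / D"
  have "0 \<le> \<mu>" "\<mu> \<le> 1" using assms(9,10) by (auto simp: \<mu>_def D_def divide_le_eq_1)
  have \<mu>D: "\<mu> * D = a" using assms(9,10) by (cases "D = 0") (auto simp: \<mu>_def D_def)
  have y: "p + \<mu> *\<^sub>R d \<in> C"
    using convexD_alt[OF assms(1,2,3) \<open>0 \<le> \<mu>\<close> \<open>\<mu> \<le> 1\<close>] by (simp add: algebra_simps)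
  show ?thesis
  proof (cases "1 + \<kappa> * b \<ge> 0")
    case True
    define t where "t = 1 + \<kappa> * b"
    have "0 \<le> t" "t \<le> 1" using True assms(7,8) by (auto simp: t_def mult_nonneg_nonpos)
    have "p + e + (\<mu> * \<kappa>) *\<^sub>R d \<in> C"
      using convexD_alt[OF assms(1,4,5) \<open>0 \<le> \<mu>\<close> \<open>\<mu> \<le> 1\<close>] by (simp add: algebra_simps)
    from convexD_alt[OF assms(1) y this \<open>0 \<le> t\<close> \<open>t \<le> 1\<close>]
    have "p + (\<mu> * (1 - t + t * \<kappa>)) *\<^sub>R d + t *\<^sub>R e \<in> C"
      by (simp add: algebra_simps)
    moreover have "\<mu> * (1 - t + t * \<kappa>) = \<kappa> * (\<mu> * D)"
      by (simp add: t_def D_def algebra_simps)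
    ultimately show ?thesis by (simp add: t_def \<mu>D)
  next
    case False
    then have "b < 0" using assms(7) by (smt (verit) mult_nonneg_nonneg)
    define s where "s = \<kappa> + 1 / b"
    have "0 \<le> s" "s \<le> 1" using False \<open>b < 0\<close> assms(9,10)
      by (auto simp: s_def field_simps)
    from convexD_alt[OF assms(1) y w \<open>0 \<le> s\<close> \<open>s \<le> 1\<close>]
    have "p + ((1 - s) * \<mu> + s * a) *\<^sub>R d + (s * b) *\<^sub>R e \<in> C"
      by (simp add: algebra_simps)
    moreover have "(1 - s) * \<mu> + s * a = \<kappa> * a"
      using \<mu>D \<open>b < 0\<close> by (simp add: s_def D_def field_simps)
    moreover have "s * b = 1 + \<kappa> * b" using \<open>b < 0\<close> by (simp add: s_def field_simps)
    ultimately show ?thesis by simp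
  qed
qed

lemma convex_homothety_far_side:
  fixes C :: "(real^2) set"
  assumes C: "convex C" "p \<in> C" "q \<in> C"
    and chord: "\<And>s. p + s *\<^sub>R (q - p) \<in> C \<Longrightarrow> 0 \<le> s \<and> s \<le> 1"
    and images: "p + e \<in> C" "p + \<kappa> *\<^sub>R (q - p) + e \<in> C" and "\<kappa> > 0"
    and e: "cross2 (q - p) e \<noteq> 0"
    and w: "w \<in> C" "cross2 (q - p) e * cross2 (q - p) (w - p) \<le> 0"
  shows "p + \<kappa> *\<^sub>R (w - p) + e \<in> C"
proof -
  define d where "d = q - p"
  define c where "c = cross2 d e"
  define a where "a = cross2 (w - p) e / c"
  define b where "b = cross2 d (w - p) / c"
  have "c \<noteq> 0" using e by (simp add: c_def d_def)
  have w_eq: "w = p + a *\<^sub>R d + b *\<^sub>R e"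
    using cross2_coordinates[OF \<open>c \<noteq> 0\<close>[unfolded c_def], of "w - p"]
    by (simp add: a_def b_def c_def algebra_simps)
  have "b = c * cross2 d (w - p) / c\<^sup>2" using \<open>c \<noteq> 0\<close> by (simp add: b_def power2_eq_square)
  then have "b \<le> 0" using w(2) by (simp add: c_def d_def divide_nonpos_nonneg)
  define t where "t = 1 / (1 - b)"
  have t: "t * (1 - b) = 1" "0 < t" "t \<le> 1" using \<open>b \<le> 0\<close> by (auto simp: t_def)
  have t_b: "t * b + (1 - t) = 0" using t(1) by (simp add: algebra_simps)
  have "0 \<le> 1 - t" "1 - t \<le> 1" using t by auto
  note combine = convexD_alt[OF C(1) w(1) _ this]
  \<comment> \<open>where the segments from w to the images of p and q cross the line pq\<close>
  have "t *\<^sub>R w + (1 - t) *\<^sub>R (p + e) = p + (t * a) *\<^sub>R d + (t * b + (1 - t)) *\<^sub>R e"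
    by (simp add: w_eq algebra_simps)
  then have "0 \<le> t * a" using combine[OF images(1)] chord t_b by (simp add: d_def)
  then have "0 \<le> a" using t(2) by (simp add: zero_le_mult_iff)
  have "t *\<^sub>R w + (1 - t) *\<^sub>R (p + \<kappa> *\<^sub>R d + e)
      = p + (t * a + (1 - t) * \<kappa>) *\<^sub>R d + (t * b + (1 - t)) *\<^sub>R e"
    by (simp add: w_eq algebra_simps)
  then have "t * a + (1 - t) * \<kappa> \<le> 1" using combine[OF images(2)] chord t_b by (simp add: d_def)
  then have "(1 - b) * (t * a + (1 - t) * \<kappa>) \<le> 1 - b" using \<open>b \<le> 0\<close> by simp
  moreover have "(1 - b) * (t * a + (1 - t) * \<kappa>)
      = (t * (1 - b)) * a + (1 - b) * \<kappa> - (t * (1 - b)) * \<kappa>"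
    by (simp add: algebra_simps)
  ultimately have "a \<le> 1 + (\<kappa> - 1) * b" unfolding t(1) by (simp add: algebra_simps)
  have "p + (\<kappa> * a) *\<^sub>R d + (1 + \<kappa> * b) *\<^sub>R e \<in> C"
    using C images \<open>\<kappa> > 0\<close> w(1) w_eq \<open>b \<le> 0\<close> \<open>0 \<le> a\<close> \<open>a \<le> 1 + (\<kappa> - 1) * b\<close>
    by (intro convex_trapezoid_point) (auto simp: d_def)
  then show ?thesis by (simp add: w_eq algebra_simps)
qed

section \<open>Continuous injections on connected sets\<close>

lemma continuous_inj_endpoint_extremal:
  fixes f :: "'a::topological_space \<Rightarrow> real"
  assumes "continuous_on S f" "inj_on f S" "w \<in> S" "connected (S - {w})"
  shows "(\<forall>y\<in>S. f w \<le> f y) \<or> (\<forall>y\<in>S. f y \<le> f w)"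
proof (rule ccontr)
  assume "\<not> ?thesis"
  then obtain a b where ab: "a \<in> S" "b \<in> S" "f a < f w" "f w < f b" by (auto simp: not_le)
  have "connected (f ` (S - {w}))"
    using connected_continuous_image[OF continuous_on_subset[OF assms(1)] assms(4)] by auto
  moreover have "f a \<in> f ` (S - {w})" "f b \<in> f ` (S - {w})" using ab by auto
  ultimately have "f w \<in> f ` (S - {w})" using ab unfolding connected_iff_interval
    by (meson less_imp_le)
  then show False using assms(2,3) by (auto dest: inj_onD)
qed

lemma continuous_inj_between_endpoints:
  fixes f :: "'a::topological_space \<Rightarrow> real"
  assumes "continuous_on S f" "inj_on f S" "w1 \<in> S" "w2 \<in> S" "w1 \<noteq> w2"
    and "connected (S - {w1})" "connected (S - {w2})" "x \<in> S"
  shows "f w1 \<le> f x \<and> f x \<le> f w2 \<or> f w2 \<le> f x \<and> f x \<le> f w1"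
proof -
  have "f w1 \<noteq> f w2" using assms(2-5) by (auto dest: inj_onD)
  then show ?thesis
    using continuous_inj_endpoint_extremal[OF assms(1,2,3,6)]
      continuous_inj_endpoint_extremal[OF assms(1,2,4,7)] assms(3,4,8)
    by (meson antisym)
qed

lemma connected_closed_segment_minus_endpoint:
  fixes a b :: "'a::euclidean_space"
  assumes "a \<noteq> b"
  shows "connected (closed_segment a b - {a})" "connected (closed_segment a b - {b})"
proof -
  have "connected (open_segment a b)" by (simp add: convex_connected)
  moreover have "closure (open_segment a b) = closed_segment a b" using assms by simp
  ultimately show "connected (closed_segment a b - {a})" "connected (closed_segment a b - {b})"
    by (auto intro: connected_intermediate_closure simp: open_segment_def)
qed

section \<open>The gauge of a polygon\<close>

lemma polytope_eq_halfspaces_le_1: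
  fixes Q :: "'a::euclidean_space set"
  assumes "polytope Q" "0 \<in> interior Q"
  obtains A where "finite A" "Q = {v. \<forall>a\<in>A. a \<bullet> v \<le> 1}"
proof -
  obtain F where F: "finite F" "Q = \<Inter>F" "\<forall>h\<in>F. \<exists>a b. a \<noteq> 0 \<and> h = {x. a \<bullet> x \<le> b}"
    using assms(1) polytope_imp_polyhedron unfolding polyhedron_def by blast
  then obtain a b where ab: "\<And>h. h \<in> F \<Longrightarrow> a h \<noteq> 0 \<and> h = {x. a h \<bullet> x \<le> b h}"
    by metis
  have "b h > 0" if "h \<in> F" for h
  proof -
    have "0 \<in> interior h" using assms(2) F(2) that interior_mono by blast
    then show ?thesis using ab[OF that] interior_halfspace_le by (metis mem_Collect_eq inner_zero_right)
  qed
  then have "Q = {v. \<forall>a\<in>(\<lambda>h. (1 / b h) *\<^sub>R a h) ` F. a \<bullet> v \<le> 1}"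
    using F(2) ab by (auto simp: divide_le_eq_1_pos)
  then show ?thesis using F(1) that by blast
qed

locale polygon_gauge =
  fixes A Q :: "(real^2) set"
  assumes finite_normals: "finite A"
    and Q_eq: "Q = {v. \<forall>a\<in>A. a \<bullet> v \<le> 1}"
    and bounded_Q: "bounded Q"
begin

lemma normals_nonempty: "A \<noteq> {}"
  using Q_eq bounded_Q not_bounded_UNIV by auto

definition \<gamma> :: "real^2 \<Rightarrow> real" where
  "\<gamma> v = Max ((\<lambda>a. a \<bullet> v) ` A)"

lemma gamma_le_iff: "\<gamma> v \<le> t \<longleftrightarrow> (\<forall>a\<in>A. a \<bullet> v \<le> t)"
  unfolding \<gamma>_def using finite_normals normals_nonempty by simp

lemma inner_le_gamma: "a \<in> A \<Longrightarrow> a \<bullet> v \<le> \<gamma> v"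
  using gamma_le_iff by blast

lemma gamma_attained: "\<exists>a\<in>A. a \<bullet> v = \<gamma> v"
proof -
  have "\<gamma> v \<in> (\<lambda>a. a \<bullet> v) ` A"
    unfolding \<gamma>_def using finite_normals normals_nonempty by (intro Max_in) auto
  then show ?thesis by auto
qed

lemma gamma_scaleR: assumes "c \<ge> 0" shows "\<gamma> (c *\<^sub>R v) = c * \<gamma> v"
proof (rule antisym)
  show "\<gamma> (c *\<^sub>R v) \<le> c * \<gamma> v"
    unfolding gamma_le_iff using inner_le_gamma assms by (simp add: mult_left_mono)
  obtain a where "a \<in> A" "a \<bullet> v = \<gamma> v" using gamma_attained by blast
  then show "c * \<gamma> v \<le> \<gamma> (c *\<^sub>R v)" using inner_le_gamma[of a "c *\<^sub>R v"] by simp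
qed

lemma mem_Q_iff: "v \<in> Q \<longleftrightarrow> \<gamma> v \<le> 1"
  using Q_eq gamma_le_iff by auto

lemma gamma_zero [simp]: "\<gamma> 0 = 0"
  using gamma_attained[of 0] by auto

lemma gamma_pos: assumes "v \<noteq> 0" shows "\<gamma> v > 0"
proof (rule ccontr)
  assume "\<not> \<gamma> v > 0"
  obtain B where B: "\<forall>y\<in>Q. norm y \<le> B" using bounded_Q bounded_iff by blast
  define t where "t = (\<bar>B\<bar> + 1) / norm v"
  have "t > 0" using assms by (simp add: t_def)
  then have "t * \<gamma> v \<le> 0"
    using \<open>\<not> \<gamma> v > 0\<close> by (intro mult_nonneg_nonpos) auto
  then have "t *\<^sub>R v \<in> Q" using \<open>t > 0\<close> by (simp add: mem_Q_iff gamma_scaleR)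
  moreover have "norm (t *\<^sub>R v) = \<bar>B\<bar> + 1" using assms \<open>t > 0\<close> by (simp add: t_def)
  ultimately show False using B by fastforce
qed

lemma gamma_nonneg: "\<gamma> v \<ge> 0"
  using gamma_pos[of v] by (cases "v = 0") auto

lemma gamma_eq_0_iff: "\<gamma> v = 0 \<longleftrightarrow> v = 0"
  using gamma_pos by force

lemma convex_on_gamma: "convex_on UNIV \<gamma>"
proof (rule convex_onI[OF _ convex_UNIV])
  fix u :: real and x y :: "real^2"
  assume u: "0 < u" "u < 1"
  show "\<gamma> ((1 - u) *\<^sub>R x + u *\<^sub>R y) \<le> (1 - u) * \<gamma> x + u * \<gamma> y"
    unfolding gamma_le_iff
  proof
    fix a assume "a \<in> A"
    then have "(1 - u) * (a \<bullet> x) + u * (a \<bullet> y) \<le> (1 - u) * \<gamma> x + u * \<gamma> y"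
      using u by (intro add_mono mult_left_mono inner_le_gamma) auto
    then show "a \<bullet> ((1 - u) *\<^sub>R x + u *\<^sub>R y) \<le> (1 - u) * \<gamma> x + u * \<gamma> y"
      by (simp add: inner_add_right)
  qed
qed

lemma continuous_on_gamma: "continuous_on S \<gamma>"
  using convex_on_continuous[OF open_UNIV convex_on_gamma] continuous_on_subset by blast

lemma convex_Q: "convex Q"
proof -
  have "Q = (\<Inter>a\<in>A. {v. a \<bullet> v \<le> 1})" using Q_eq by auto
  then show ?thesis by (simp add: convex_INT convex_halfspace_le)
qed

lemma compact_Q: "compact Q"
proof -
  have "Q = {v. \<gamma> v \<le> 1}" using mem_Q_iff by blast
  moreover have "closed {v. \<gamma> v \<le> 1}"
    by (intro closed_Collect_le continuous_on_gamma continuous_on_const)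
  ultimately show ?thesis using bounded_Q by (simp add: compact_eq_bounded_closed)
qed

lemma mem_Q_homothet_iff:
  assumes "lam > 0"
  shows "z \<in> homothet Q lam x \<longleftrightarrow> \<gamma> (z - x) \<le> lam"
    and "z \<in> homothet (reflect Q) lam x \<longleftrightarrow> \<gamma> (x - z) \<le> lam"
proof -
  have *: "\<gamma> ((1 / lam) *\<^sub>R v) \<le> 1 \<longleftrightarrow> \<gamma> v \<le> lam" for v
    using assms by (simp add: gamma_scaleR)
  show "z \<in> homothet Q lam x \<longleftrightarrow> \<gamma> (z - x) \<le> lam"
    using * by (simp add: mem_homothet_iff[OF assms] mem_Q_iff)
  have "- ((1 / lam) *\<^sub>R (z - x)) = (1 / lam) *\<^sub>R (x - z)"
    by (simp add: algebra_simps)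
  then show "z \<in> homothet (reflect Q) lam x \<longleftrightarrow> \<gamma> (x - z) \<le> lam"
    using * by (simp add: mem_homothet_iff[OF assms] mem_reflect_iff mem_Q_iff)
qed

lemma dQ_eq_gamma: "dQ Q y x = \<gamma> (x - y)"
proof -
  have "0 \<le> lam \<and> x \<in> homothet Q lam y \<longleftrightarrow> \<gamma> (x - y) \<le> lam" for lam
  proof (cases "lam = 0")
    case True
    have "0 \<in> Q" by (simp add: mem_Q_iff)
    then show ?thesis
      using True gamma_nonneg[of "x - y"] gamma_eq_0_iff[of "x - y"] by (auto simp: homothet_0)
  next
    case False
    then show ?thesis
      using mem_Q_homothet_iff(1)[of lam x y] gamma_nonneg[of "x - y"] by (cases "lam > 0") auto
  qed
  then have "{lam. 0 \<le> lam \<and> x \<in> homothet Q lam y} = {\<gamma> (x - y)..}" by auto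
  then show ?thesis unfolding dQ_def by simp
qed

text \<open>Moving z away from x scales x - z, hence \<gamma> (x - z), up: points with \<gamma> (x - z) = lam
  are not interior.\<close>
lemma interior_gamma_ball:
  assumes "lam > 0"
  shows "interior {z. \<gamma> (x - z) \<le> lam} = {z. \<gamma> (x - z) < lam}"
proof
  have "open {z. \<gamma> (x - z) < lam}"
    by (intro open_Collect_less continuous_on_compose2[OF continuous_on_gamma])
      (auto intro!: continuous_intros)
  then show "{z. \<gamma> (x - z) < lam} \<subseteq> interior {z. \<gamma> (x - z) \<le> lam}"
    by (intro interior_maximal) auto
next
  show "interior {z. \<gamma> (x - z) \<le> lam} \<subseteq> {z. \<gamma> (x - z) < lam}"
  proof
    fix z assume z: "z \<in> interior {z. \<gamma> (x - z) \<le> lam}"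
    then obtain \<epsilon> where "\<epsilon> > 0" and ball: "ball z \<epsilon> \<subseteq> {z. \<gamma> (x - z) \<le> lam}"
      by (meson mem_interior)
    have le: "\<gamma> (x - z) \<le> lam" using z interior_subset by blast
    show "z \<in> {z. \<gamma> (x - z) < lam}"
    proof (rule ccontr)
      assume "z \<notin> {z. \<gamma> (x - z) < lam}"
      then have eq: "\<gamma> (x - z) = lam" using le by simp
      then have "x \<noteq> z" using assms by auto
      define t where "t = \<epsilon> / (2 * norm (z - x))"
      have "t > 0" using \<open>x \<noteq> z\<close> \<open>\<epsilon> > 0\<close> by (simp add: t_def)
      have "dist z (z + t *\<^sub>R (z - x)) < \<epsilon>"
        using \<open>x \<noteq> z\<close> \<open>\<epsilon> > 0\<close> by (simp add: t_def dist_norm)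
      then have "\<gamma> ((1 + t) *\<^sub>R (x - z)) \<le> lam"
        using ball by (auto simp: algebra_simps)
      then show False using eq \<open>t > 0\<close> assms by (simp add: gamma_scaleR)
    qed
  qed
qed

lemma Qstar_at_eq:
  assumes "p \<in> Y" and nearest: "\<forall>y\<in>Y. \<gamma> (x - p) \<le> \<gamma> (x - y)" and "\<gamma> (x - p) > 0"
  shows "Qstar_at Q Y x = {z. \<gamma> (x - z) \<le> \<gamma> (x - p)}"
proof -
  let ?r = "\<gamma> (x - p)"
  have "0 \<le> lam \<and> interior (homothet (reflect Q) lam x) \<inter> Y = {} \<longleftrightarrow> lam \<in> {0..?r}" for lam
  proof (cases "lam > 0")
    case True
    then have "homothet (reflect Q) lam x = {z. \<gamma> (x - z) \<le> lam}"
      using mem_Q_homothet_iff(2) by blast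
    then have "interior (homothet (reflect Q) lam x) = {z. \<gamma> (x - z) < lam}"
      using interior_gamma_ball[OF True] by simp
    then show ?thesis using True assms(1) nearest by (auto intro: less_le_trans)
  next
    case False
    then show ?thesis using assms(3) by (cases "lam = 0") (auto simp: homothet_0)
  qed
  then have "{lam. 0 \<le> lam \<and> interior (homothet (reflect Q) lam x) \<inter> Y = {}} = {0..?r}"
    by blast
  then show ?thesis
    unfolding Qstar_at_def using assms(3) mem_Q_homothet_iff(2) by auto
qed

end

section \<open>Disks centred on a bisector\<close>

locale polygon_bisector = polygon_gauge +
  fixes p q :: "real^2"
  assumes sites_distinct: "p \<noteq> q"
    and no_side_parallel:
      "\<forall>F. side_of F Q \<longrightarrow> (\<forall>a\<in>F. \<forall>b\<in>F. a \<noteq> b \<longrightarrow> \<not> parallel_dir p q a b)"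
begin

definition bisector :: "(real^2) set" where
  "bisector = {x. \<gamma> (x - p) = \<gamma> (x - q)}"

definition disk :: "real^2 \<Rightarrow> (real^2) set" where
  "disk x = {z. \<gamma> (x - z) \<le> \<gamma> (x - p)}"

lemma face_normal_orthogonal_trivial:
  assumes "a \<in> A" "a \<bullet> (q - p) = 0" "u \<in> Q" "a \<bullet> u = 1" "u + c *\<^sub>R (q - p) \<in> Q"
  shows "c = 0"
proof (rule ccontr)
  assume "c \<noteq> 0"
  define F where "F = Q \<inter> {v. a \<bullet> v = 1}"
  have "F face_of Q" unfolding F_def
    using Q_eq assms(1) by (intro face_of_Int_supporting_hyperplane_le[OF convex_Q]) auto
  have u': "u + c *\<^sub>R (q - p) \<in> F" "u \<in> F"
    using assms by (simp_all add: F_def inner_add_right)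
  have "u + c *\<^sub>R (q - p) \<noteq> u" using \<open>c \<noteq> 0\<close> sites_distinct by simp
  then have "aff_dim {u + c *\<^sub>R (q - p), u} \<le> aff_dim F"
    using u' by (intro aff_dim_subset) auto
  moreover have "aff_dim F \<le> aff_dim {v. a \<bullet> v = 1}" by (intro aff_dim_subset) (auto simp: F_def)
  moreover have "a \<noteq> 0" using assms(4) by auto
  ultimately have "side_of F Q"
    using \<open>F face_of Q\<close> \<open>u + c *\<^sub>R (q - p) \<noteq> u\<close> by (simp add: side_of_def)
  moreover have "parallel_dir p q (u + c *\<^sub>R (q - p)) u"
    by (simp add: parallel_dir_def cross2_simps)
  ultimately show False using no_side_parallel u' \<open>u + c *\<^sub>R (q - p) \<noteq> u\<close> by blast
qed

text \<open>By general position, \<gamma> has no flat piece in the direction of pq: along a line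
  parallel to pq it stays strictly below any common bound of two of its values in between.\<close>
lemma gamma_lt_between:
  assumes "r > 0" "t1 < t2" "t2 < t3"
    and "\<gamma> (v - t1 *\<^sub>R (q - p)) \<le> r" "\<gamma> (v - t3 *\<^sub>R (q - p)) \<le> r"
  shows "\<gamma> (v - t2 *\<^sub>R (q - p)) < r"
proof (rule ccontr)
  let ?d = "q - p" and ?r2 = "\<gamma> (v - t2 *\<^sub>R (q - p))"
  assume "\<not> ?r2 < r"
  then have "r \<le> ?r2" "?r2 > 0" using assms(1) by auto
  obtain a where a: "a \<in> A" "a \<bullet> (v - t2 *\<^sub>R ?d) = ?r2" using gamma_attained by blast
  have "a \<bullet> (v - t1 *\<^sub>R ?d) \<le> ?r2" "a \<bullet> (v - t3 *\<^sub>R ?d) \<le> ?r2"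
    using inner_le_gamma[OF a(1)] assms(4,5) \<open>r \<le> ?r2\<close> by (meson order.trans)+
  then have "(t2 - t1) * (a \<bullet> ?d) \<le> 0" "(t3 - t2) * (a \<bullet> ?d) \<ge> 0"
    using a(2) by (simp_all add: inner_diff_right algebra_simps)
  then have ad: "a \<bullet> ?d = 0" using assms(2,3) by (simp add: mult_le_0_iff zero_le_mult_iff)
  define u where "u = (1 / ?r2) *\<^sub>R (v - t2 *\<^sub>R ?d)"
  have "u \<in> Q" "a \<bullet> u = 1"
    using a(2) \<open>?r2 > 0\<close> by (simp_all add: u_def mem_Q_iff gamma_scaleR)
  have "u + ((t2 - t3) / ?r2) *\<^sub>R ?d = (1 / ?r2) *\<^sub>R (v - t3 *\<^sub>R ?d)"
    by (simp add: u_def algebra_simps diff_divide_distrib)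
  moreover have "\<gamma> ((1 / ?r2) *\<^sub>R (v - t3 *\<^sub>R ?d)) \<le> 1"
    using assms(5) \<open>r \<le> ?r2\<close> \<open>?r2 > 0\<close> by (simp add: gamma_scaleR)
  ultimately have "u + ((t2 - t3) / ?r2) *\<^sub>R ?d \<in> Q" by (simp add: mem_Q_iff)
  then have "(t2 - t3) / ?r2 = 0"
    by (rule face_normal_orthogonal_trivial[OF a(1) ad \<open>u \<in> Q\<close> \<open>a \<bullet> u = 1\<close>])
  then show False using assms(3) \<open>?r2 > 0\<close> by simp
qed

lemma bisector_gamma_pos: "x \<in> bisector \<Longrightarrow> \<gamma> (x - p) > 0"
  using gamma_pos[of "x - p"] gamma_pos[of "p - q"] sites_distinct
  by (cases "x = p") (auto simp: bisector_def)

lemma sites_mem_disk: "x \<in> bisector \<Longrightarrow> p \<in> disk x" "x \<in> bisector \<Longrightarrow> q \<in> disk x"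
  by (simp_all add: disk_def bisector_def)

lemma convex_disk: "convex (disk x)"
proof -
  have "z \<in> disk x \<longleftrightarrow> (\<forall>a\<in>A. (- a) \<bullet> z \<le> \<gamma> (x - p) - a \<bullet> x)" for z
    by (simp add: disk_def gamma_le_iff inner_diff_right algebra_simps)
  then have eq: "disk x = (\<Inter>a\<in>A. {z. (- a) \<bullet> z \<le> \<gamma> (x - p) - a \<bullet> x})" by blast
  show ?thesis unfolding eq by (intro convex_INT convex_halfspace_le)
qed

lemma disk_meets_line:
  assumes "x \<in> bisector" "p + s *\<^sub>R (q - p) \<in> disk x"
  shows "0 \<le> s \<and> s \<le> 1"
proof -
  define v where "v = x - p"
  have r: "\<gamma> (x - p) > 0" using bisector_gamma_pos[OF assms(1)] .
  have at0: "\<gamma> (v - 0 *\<^sub>R (q - p)) = \<gamma> (x - p)" by (simp add: v_def)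
  have at1: "\<gamma> (v - 1 *\<^sub>R (q - p)) = \<gamma> (x - p)"
    using assms(1) by (simp add: v_def bisector_def algebra_simps)
  have "\<gamma> (v - s *\<^sub>R (q - p)) \<le> \<gamma> (x - p)"
    using assms(2) by (simp add: disk_def v_def algebra_simps)
  then show ?thesis
    using gamma_lt_between[OF r, of 0 1 s v] gamma_lt_between[OF r, of s 0 1 v] at0 at1
    by (cases "s < 0"; cases "s > 1") auto
qed

definition homothety :: "real^2 \<Rightarrow> real^2 \<Rightarrow> real^2 \<Rightarrow> real^2" where
  "homothety x x' z = x' + (\<gamma> (x' - p) / \<gamma> (x - p)) *\<^sub>R (z - x)"

lemma homothety_mem_disk_iff:
  assumes "x \<in> bisector" "x' \<in> bisector"
  shows "homothety x x' z \<in> disk x' \<longleftrightarrow> z \<in> disk x"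
proof -
  let ?r = "\<gamma> (x - p)" and ?r' = "\<gamma> (x' - p)"
  have "?r > 0" "?r' > 0" using bisector_gamma_pos assms by auto
  have "x' - homothety x x' z = (?r' / ?r) *\<^sub>R (x - z)"
    by (simp add: homothety_def algebra_simps)
  then have "\<gamma> (x' - homothety x x' z) = (?r' / ?r) * \<gamma> (x - z)"
    using \<open>?r > 0\<close> \<open>?r' > 0\<close> by (simp add: gamma_scaleR)
  moreover have "(?r' / ?r) * \<gamma> (x - z) \<le> ?r' \<longleftrightarrow> \<gamma> (x - z) \<le> ?r"
    using \<open>?r > 0\<close> \<open>?r' > 0\<close> by (auto simp: field_simps mult_le_cancel_left_pos)
  ultimately show ?thesis by (simp add: disk_def)
qed

lemma homothety_eq:
  "homothety x x' z = p + (\<gamma> (x' - p) / \<gamma> (x - p)) *\<^sub>R (z - p) + (homothety x x' p - p)"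
  by (simp add: homothety_def algebra_simps)

lemma homothety_swap_offset:
  assumes "x \<in> bisector" "x' \<in> bisector"
  shows "homothety x' x p - p = - (\<gamma> (x - p) / \<gamma> (x' - p)) *\<^sub>R (homothety x x' p - p)"
proof -
  let ?r = "\<gamma> (x - p)" and ?r' = "\<gamma> (x' - p)"
  have "?r > 0" "?r' > 0" using bisector_gamma_pos assms by auto
  then have "(?r / ?r') *\<^sub>R ((?r' / ?r) *\<^sub>R (p - x)) = p - x" by simp
  then show ?thesis by (simp add: homothety_def algebra_simps)
qed

lemma disk_far_side_subset:
  assumes "x \<in> bisector" "x' \<in> bisector"
    and "cross2 (q - p) (homothety x x' p - p) \<noteq> 0"
    and "z \<in> disk x'" "cross2 (q - p) (homothety x x' p - p) * cross2 (q - p) (z - p) \<le> 0"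
  shows "z \<in> disk x"
proof -
  let ?\<kappa> = "\<gamma> (x' - p) / \<gamma> (x - p)" and ?e = "homothety x x' p - p"
  have "p + ?\<kappa> *\<^sub>R (z - p) + ?e \<in> disk x'"
  proof (rule convex_homothety_far_side[OF convex_disk sites_mem_disk[OF assms(2)]])
    show "p + s *\<^sub>R (q - p) \<in> disk x' \<Longrightarrow> 0 \<le> s \<and> s \<le> 1" for s
      using disk_meets_line[OF assms(2)] by blast
    show "p + ?e \<in> disk x'"
      using homothety_mem_disk_iff[OF assms(1,2)] sites_mem_disk[OF assms(1)] by simp
    show "p + ?\<kappa> *\<^sub>R (q - p) + ?e \<in> disk x'"
      unfolding homothety_eq[of x x' q, symmetric]
      using homothety_mem_disk_iff[OF assms(1,2)] sites_mem_disk[OF assms(1)] by simp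
    show "?\<kappa> > 0" using bisector_gamma_pos assms(1,2) by simp
  qed (use assms in auto)
  then show ?thesis
    unfolding homothety_eq[of x x' z, symmetric] using homothety_mem_disk_iff[OF assms(1,2)] by simp
qed

lemma homothety_offset_on_line:
  assumes "x \<in> bisector" "x' \<in> bisector" "cross2 (q - p) (homothety x x' p - p) = 0"
  obtains c where "homothety x x' p - p = c *\<^sub>R (q - p)" "0 \<le> c"
    "c + \<gamma> (x' - p) / \<gamma> (x - p) \<le> 1"
proof -
  let ?lam = "\<gamma> (x' - p) / \<gamma> (x - p)"
  obtain c where c: "homothety x x' p - p = c *\<^sub>R (q - p)"
    using cross2_eq_0_imp_parallel[OF _ assms(3)] sites_distinct by force
  have "homothety x x' p \<in> disk x'" "homothety x x' q \<in> disk x'"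
    using homothety_mem_disk_iff[OF assms(1,2)] sites_mem_disk[OF assms(1)] by auto
  moreover have "homothety x x' p = p + c *\<^sub>R (q - p)" using c by (simp add: algebra_simps)
  moreover have "homothety x x' q = p + (c + ?lam) *\<^sub>R (q - p)"
    using homothety_eq[of x x' q] c by (simp add: algebra_simps)
  ultimately show ?thesis using that[OF c] disk_meets_line[OF assms(2)] by auto
qed

text \<open>If the homothety between two disks moves p along the line pq, comparing how the
  two disks meet that line in both directions shows that the homothety is the identity.\<close>
lemma homothety_offset_on_line_imp_eq:
  assumes "x \<in> bisector" "x' \<in> bisector" "cross2 (q - p) (homothety x x' p - p) = 0"
  shows "x = x'"
proof -
  let ?r = "\<gamma> (x - p)" and ?r' = "\<gamma> (x' - p)"
  have "?r > 0" "?r' > 0" using bisector_gamma_pos assms by auto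
  obtain c where c: "homothety x x' p - p = c *\<^sub>R (q - p)" "0 \<le> c" "c + ?r' / ?r \<le> 1"
    using homothety_offset_on_line[OF assms] .
  have swap: "homothety x' x p - p = (- (?r / ?r') * c) *\<^sub>R (q - p)"
    using homothety_swap_offset[OF assms(1,2)] c(1) by simp
  then have "cross2 (q - p) (homothety x' x p - p) = 0" by (simp add: cross2_simps)
  then obtain c' where c': "homothety x' x p - p = c' *\<^sub>R (q - p)" "0 \<le> c'" "c' + ?r / ?r' \<le> 1"
    using homothety_offset_on_line[OF assms(2,1)] by blast
  have "c' *\<^sub>R (q - p) = (- (?r / ?r') * c) *\<^sub>R (q - p)" using c'(1) swap by simp
  then have "c' = - (?r / ?r') * c" using sites_distinct by (simp only: scaleR_cancel_right) simp
  then have "c = 0"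
    using c(2) c'(2) \<open>?r > 0\<close> \<open>?r' > 0\<close> by (auto simp: divide_le_0_iff mult_le_0_iff)
  then have "?r' \<le> ?r" "?r \<le> ?r'" using c(3) c'(3) \<open>?r > 0\<close> \<open>?r' > 0\<close> \<open>c' = _\<close>
    by (simp_all add: divide_le_eq_1)
  then show ?thesis using c(1) \<open>c = 0\<close> \<open>?r > 0\<close> by (simp add: homothety_def)
qed

definition disk_le :: "real^2 \<Rightarrow> real^2 \<Rightarrow> bool" where
  "disk_le x x' \<longleftrightarrow>
     (\<forall>z\<in>disk x. 0 \<le> cross2 (q - p) (z - p) \<longrightarrow> z \<in> disk x') \<and>
     (\<forall>z\<in>disk x'. cross2 (q - p) (z - p) \<le> 0 \<longrightarrow> z \<in> disk x)"

lemma disk_le_refl: "disk_le x x"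
  by (simp add: disk_le_def)

lemma disk_le_if_offset_pos:
  assumes "x \<in> bisector" "x' \<in> bisector" "cross2 (q - p) (homothety x x' p - p) > 0"
  shows "disk_le x x'"
proof -
  let ?r = "\<gamma> (x - p)" and ?r' = "\<gamma> (x' - p)"
  have "?r > 0" "?r' > 0" using bisector_gamma_pos assms by auto
  then have "cross2 (q - p) (homothety x' x p - p) < 0"
    using assms(3) homothety_swap_offset[OF assms(1,2)]
    by (simp add: cross2_simps mult_pos_pos)
  then show ?thesis
    unfolding disk_le_def
    using disk_far_side_subset[OF assms(2,1)] disk_far_side_subset[OF assms(1,2)] assms(3)
    by (auto simp: mult_nonpos_nonneg mult_nonneg_nonpos less_imp_le)
qed

lemma disk_le_total:
  assumes "x \<in> bisector" "x' \<in> bisector"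
  shows "disk_le x x' \<or> disk_le x' x"
proof -
  let ?\<beta> = "cross2 (q - p) (homothety x x' p - p)"
  have "\<gamma> (x - p) > 0" "\<gamma> (x' - p) > 0" using bisector_gamma_pos assms by auto
  then have "cross2 (q - p) (homothety x' x p - p) = - (\<gamma> (x - p) / \<gamma> (x' - p)) * ?\<beta>"
    using homothety_swap_offset[OF assms] by (simp add: cross2_simps)
  then have "?\<beta> < 0 \<Longrightarrow> cross2 (q - p) (homothety x' x p - p) > 0"
    using \<open>\<gamma> (x - p) > 0\<close> \<open>\<gamma> (x' - p) > 0\<close> by (simp add: mult_pos_neg divide_neg_pos)
  then consider "?\<beta> > 0" | "cross2 (q - p) (homothety x' x p - p) > 0" | "?\<beta> = 0"
    by linarith
  then show ?thesis
    using disk_le_if_offset_pos assms homothety_offset_on_line_imp_eq disk_le_refl by cases blast+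
qed

definition lowest :: "real^2" where
  "lowest = (SOME u. u \<in> Q \<and> (\<forall>v\<in>Q. cross2 (q - p) u \<le> cross2 (q - p) v))"

definition highest :: "real^2" where
  "highest = (SOME u. u \<in> Q \<and> (\<forall>v\<in>Q. cross2 (q - p) v \<le> cross2 (q - p) u))"

lemma lowest: "lowest \<in> Q" "v \<in> Q \<Longrightarrow> cross2 (q - p) lowest \<le> cross2 (q - p) v"
proof -
  have "Q \<noteq> {}" using mem_Q_iff[of 0] by auto
  then have "\<exists>u. u \<in> Q \<and> (\<forall>v\<in>Q. cross2 (q - p) u \<le> cross2 (q - p) v)"
    using continuous_attains_inf[OF compact_Q _ continuous_on_cross2] by blast
  then have "lowest \<in> Q \<and> (\<forall>v\<in>Q. cross2 (q - p) lowest \<le> cross2 (q - p) v)"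
    unfolding lowest_def by (rule someI_ex)
  then show "lowest \<in> Q" "v \<in> Q \<Longrightarrow> cross2 (q - p) lowest \<le> cross2 (q - p) v" by auto
qed

lemma highest: "highest \<in> Q" "v \<in> Q \<Longrightarrow> cross2 (q - p) v \<le> cross2 (q - p) highest"
proof -
  have "Q \<noteq> {}" using mem_Q_iff[of 0] by auto
  then have "\<exists>u. u \<in> Q \<and> (\<forall>v\<in>Q. cross2 (q - p) v \<le> cross2 (q - p) u)"
    using continuous_attains_sup[OF compact_Q _ continuous_on_cross2] by blast
  then have "highest \<in> Q \<and> (\<forall>v\<in>Q. cross2 (q - p) v \<le> cross2 (q - p) highest)"
    unfolding highest_def by (rule someI_ex)
  then show "highest \<in> Q" "v \<in> Q \<Longrightarrow> cross2 (q - p) v \<le> cross2 (q - p) highest" by auto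
qed

lemma lowest_lt_highest: "cross2 (q - p) lowest < cross2 (q - p) highest"
proof -
  let ?d = "q - p"
  define v :: "real^2" where "v = (\<chi> i. if i = 1 then - (?d$2) else ?d$1)"
  have "?d \<noteq> 0" using sites_distinct by simp
  then have "?d$1 \<noteq> 0 \<or> ?d$2 \<noteq> 0" by (simp only: vec2_eq_0_iff) simp
  moreover have "cross2 ?d v = (?d$1)\<^sup>2 + (?d$2)\<^sup>2"
    by (simp add: v_def cross2_def power2_eq_square algebra_simps)
  ultimately have "cross2 ?d v > 0" by (simp add: sum_power2_gt_zero_iff)
  then have "v \<noteq> 0" by (auto simp: cross2_def)
  define u where "u = (1 / \<gamma> v) *\<^sub>R v"
  have "u \<in> Q" using gamma_pos[OF \<open>v \<noteq> 0\<close>] by (simp add: u_def mem_Q_iff gamma_scaleR)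
  moreover have "cross2 ?d u > 0"
    using gamma_pos[OF \<open>v \<noteq> 0\<close>] \<open>cross2 ?d v > 0\<close> by (simp add: u_def cross2_simps)
  moreover have "0 \<in> Q" by (simp add: mem_Q_iff)
  ultimately show ?thesis using lowest(2)[of 0] highest(2)[of u] by (simp add: cross2_def)
qed

text \<open>As disk x = x - \<gamma> (x - p) Q, these are the extreme values of cross2 (q - p)
  on disk x.\<close>
definition disk_top :: "real^2 \<Rightarrow> real" where
  "disk_top x = cross2 (q - p) x - \<gamma> (x - p) * cross2 (q - p) lowest"

definition disk_bottom :: "real^2 \<Rightarrow> real" where
  "disk_bottom x = cross2 (q - p) x - \<gamma> (x - p) * cross2 (q - p) highest"

lemma mem_disk_iff_scaled:
  assumes "x \<in> bisector"
  shows "z \<in> disk x \<longleftrightarrow> (\<exists>u\<in>Q. z = x - \<gamma> (x - p) *\<^sub>R u)"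
proof -
  let ?r = "\<gamma> (x - p)"
  have "?r > 0" using bisector_gamma_pos[OF assms] .
  have "z = x - ?r *\<^sub>R u \<longleftrightarrow> u = (1 / ?r) *\<^sub>R (x - z)" for u
    using \<open>?r > 0\<close> by auto
  moreover have "(1 / ?r) *\<^sub>R (x - z) \<in> Q \<longleftrightarrow> z \<in> disk x"
    using \<open>?r > 0\<close> by (simp add: mem_Q_iff gamma_scaleR disk_def)
  ultimately show ?thesis by auto
qed

lemma disk_heights:
  assumes "x \<in> bisector" "z \<in> disk x"
  shows "disk_bottom x \<le> cross2 (q - p) z" "cross2 (q - p) z \<le> disk_top x"
proof -
  obtain u where "u \<in> Q" "z = x - \<gamma> (x - p) *\<^sub>R u" using mem_disk_iff_scaled assms by blast
  moreover have "\<gamma> (x - p) > 0" using bisector_gamma_pos[OF assms(1)] .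
  ultimately show "disk_bottom x \<le> cross2 (q - p) z" "cross2 (q - p) z \<le> disk_top x"
    using lowest(2) highest(2)
    by (simp_all add: disk_top_def disk_bottom_def cross2_simps mult_left_mono)
qed

lemma disk_top_attained:
  assumes "x \<in> bisector"
  shows "\<exists>z\<in>disk x. cross2 (q - p) z = disk_top x"
proof
  show "x - \<gamma> (x - p) *\<^sub>R lowest \<in> disk x" using mem_disk_iff_scaled[OF assms] lowest(1) by blast
qed (simp add: disk_top_def cross2_simps)

lemma disk_bottom_attained:
  assumes "x \<in> bisector"
  shows "\<exists>z\<in>disk x. cross2 (q - p) z = disk_bottom x"
proof
  show "x - \<gamma> (x - p) *\<^sub>R highest \<in> disk x" using mem_disk_iff_scaled[OF assms] highest(1) by blast
qed (simp add: disk_bottom_def cross2_simps)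

lemma disk_le_heights:
  assumes "x \<in> bisector" "x' \<in> bisector" "disk_le x x'"
  shows "disk_top x \<le> disk_top x'" "disk_bottom x \<le> disk_bottom x'"
proof -
  obtain z where z: "z \<in> disk x" "cross2 (q - p) z = disk_top x"
    using disk_top_attained[OF assms(1)] by blast
  have "cross2 (q - p) p \<le> disk_top x"
    using disk_heights(2)[OF assms(1) sites_mem_disk(1)[OF assms(1)]] .
  then have "z \<in> disk x'" using assms(3) z by (simp add: disk_le_def cross2_simps)
  then have "cross2 (q - p) z \<le> disk_top x'" by (rule disk_heights(2)[OF assms(2)])
  then show "disk_top x \<le> disk_top x'" using z(2) by simp
  obtain z' where z': "z' \<in> disk x'" "cross2 (q - p) z' = disk_bottom x'"
    using disk_bottom_attained[OF assms(2)] by blast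
  have "disk_bottom x' \<le> cross2 (q - p) p"
    using disk_heights(1)[OF assms(2) sites_mem_disk(1)[OF assms(2)]] .
  then have "z' \<in> disk x" using assms(3) z' by (simp add: disk_le_def cross2_simps)
  then have "disk_bottom x \<le> cross2 (q - p) z'" by (rule disk_heights(1)[OF assms(1)])
  then show "disk_bottom x \<le> disk_bottom x'" using z'(2) by simp
qed

definition disk_level :: "real^2 \<Rightarrow> real" where
  "disk_level x = disk_top x + disk_bottom x"

lemma disk_le_level:
  "x \<in> bisector \<Longrightarrow> x' \<in> bisector \<Longrightarrow> disk_le x x' \<Longrightarrow> disk_level x \<le> disk_level x'"
  using disk_le_heights by (simp add: disk_level_def add_mono)

text \<open>Equal levels force equal heights, hence equal radii, so x' - x is parallel to pq;
  then \<gamma> (x - p) would be constant on three collinear points in direction pq.\<close>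
lemma disk_le_level_eq:
  assumes "x \<in> bisector" "x' \<in> bisector" "disk_le x x'" "disk_level x = disk_level x'"
  shows "x = x'"
proof -
  let ?d = "q - p" and ?r = "\<gamma> (x - p)"
  have top: "disk_top x = disk_top x'" and bot: "disk_bottom x = disk_bottom x'"
    using disk_le_heights[OF assms(1-3)] assms(4) by (auto simp: disk_level_def)
  have width: "disk_top y - disk_bottom y = \<gamma> (y - p) * (cross2 ?d highest - cross2 ?d lowest)" for y
    by (simp add: disk_top_def disk_bottom_def algebra_simps)
  have "\<gamma> (x' - p) * (cross2 ?d highest - cross2 ?d lowest)
      = ?r * (cross2 ?d highest - cross2 ?d lowest)"
    using width[of x] width[of x'] top bot by simp
  then have r_eq: "\<gamma> (x' - p) = ?r" using lowest_lt_highest by simp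
  then have "cross2 ?d (x' - x) = 0" using top by (simp add: disk_top_def cross2_simps)
  then obtain t where t: "x' - x = t *\<^sub>R ?d"
    using cross2_eq_0_imp_parallel sites_distinct by (metis eq_iff_diff_eq_0)
  define v where "v = x - p"
  have "?r > 0" using bisector_gamma_pos[OF assms(1)] .
  have "v - 0 *\<^sub>R ?d = x - p" "v - 1 *\<^sub>R ?d = x - q"
    "v - (- t) *\<^sub>R ?d = x' - p" "v - (1 - t) *\<^sub>R ?d = x' - q"
    using t by (simp_all add: v_def algebra_simps)
  then have at: "\<gamma> (v - 0 *\<^sub>R ?d) = ?r" "\<gamma> (v - 1 *\<^sub>R ?d) = ?r"
    "\<gamma> (v - (- t) *\<^sub>R ?d) = ?r" "\<gamma> (v - (1 - t) *\<^sub>R ?d) = ?r"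
    using assms(1,2) r_eq by (simp_all only:) (simp_all add: bisector_def)
  have "\<not> t > 0" using gamma_lt_between[OF \<open>?r > 0\<close>, of "- t" 0 1 v] at by auto
  moreover have "\<not> t < 0" using gamma_lt_between[OF \<open>?r > 0\<close>, of 0 1 "1 - t" v] at by auto
  ultimately show ?thesis using t by simp
qed

lemma inj_on_disk_level: "inj_on disk_level bisector"
proof (rule inj_onI)
  fix x x' assume "x \<in> bisector" "x' \<in> bisector" "disk_level x = disk_level x'"
  then show "x = x'"
    using disk_le_total disk_le_level_eq by metis
qed

lemma disk_subset_if_level_between:
  assumes "x \<in> bisector" "w1 \<in> bisector" "w2 \<in> bisector"
    and "disk_level w1 \<le> disk_level x" "disk_level x \<le> disk_level w2"
  shows "disk x \<subseteq> disk w1 \<union> disk w2"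
proof -
  have "disk_le w1 x"
    using disk_le_total[OF assms(1,2)] disk_le_level[OF assms(1,2)] assms(4)
      inj_on_disk_level assms(1,2) disk_le_refl by (metis antisym inj_onD)
  moreover have "disk_le x w2"
    using disk_le_total[OF assms(1,3)] disk_le_level[OF assms(3,1)] assms(5)
      inj_on_disk_level assms(1,3) disk_le_refl by (metis antisym inj_onD)
  ultimately show ?thesis unfolding disk_le_def by force
qed

lemma continuous_on_disk_level: "continuous_on S disk_level"
  unfolding disk_level_def disk_top_def disk_bottom_def
  by (intro continuous_intros continuous_on_cross2
      continuous_on_compose2[OF continuous_on_gamma, of _ "\<lambda>x. x - p"]) auto

lemma mem_vcell_iff: "z \<in> vcell Q Y y \<longleftrightarrow> (\<forall>y'\<in>Y. \<gamma> (z - y) \<le> \<gamma> (z - y'))"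
  by (simp add: vcell_def dQ_eq_gamma)

lemma Qstar_at_eq_disk:
  assumes "p \<in> Y" "q \<in> Y" "z \<in> vcell Q Y p \<inter> vcell Q Y q"
  shows "z \<in> bisector" "Qstar_at Q Y z = disk z"
proof -
  show "z \<in> bisector" using assms by (auto simp: mem_vcell_iff bisector_def intro: antisym)
  then show "Qstar_at Q Y z = disk z"
    using Qstar_at_eq[OF assms(1)] assms(3) bisector_gamma_pos by (simp add: mem_vcell_iff disk_def)
qed

lemma Qstar_at_subset_along_edge:
  assumes "p \<in> Y" "q \<in> Y" "S \<subseteq> vcell Q Y p \<inter> vcell Q Y q"
    and "w1 \<in> S" "w2 \<in> S" "w1 \<noteq> w2" "connected (S - {w1})" "connected (S - {w2})" "x \<in> S"
  shows "Qstar_at Q Y x \<subseteq> Qstar_at Q Y w1 \<union> Qstar_at Q Y w2"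
proof -
  have S: "z \<in> bisector" "Qstar_at Q Y z = disk z" if "z \<in> S" for z
    using Qstar_at_eq_disk[OF assms(1,2) subsetD[OF assms(3) that]] by auto
  have "inj_on disk_level S" using inj_on_disk_level S(1) inj_on_subset by blast
  then have "disk_level w1 \<le> disk_level x \<and> disk_level x \<le> disk_level w2 \<or>
      disk_level w2 \<le> disk_level x \<and> disk_level x \<le> disk_level w1"
    using continuous_inj_between_endpoints[OF continuous_on_disk_level] assms(4-9) by blast
  then have "disk x \<subseteq> disk w1 \<union> disk w2"
    using disk_subset_if_level_between S(1) assms(4,5,9) by blast
  then show ?thesis using S(2) assms(4,5,9) by simp
qed

end

theorem lemma3:
  fixes Q Y :: "(real^2) set" and e :: "(real^2) set" and w1 w2 x :: "real^2"
  assumes "polytope Q" and "0 \<in> interior Q"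
    and "finite Y" and "general_position Q Y"
    and "voronoi_edge Q Y e"
    and "(adjacent_on_edge Q Y e w1 w2 \<and> x \<in> closed_segment w1 w2) \<or>
         (voronoi_vertex Q Y w1 \<and> voronoi_vertex Q Y w2 \<and> w1 \<noteq> w2 \<and>
          curve_endpoint e w1 \<and> curve_endpoint e w2 \<and> x \<in> e)"
  shows "Qstar_at Q Y x \<subseteq> Qstar_at Q Y w1 \<union> Qstar_at Q Y w2"
proof -
  obtain A where A: "finite A" "Q = {v. \<forall>a\<in>A. a \<bullet> v \<le> 1}"
    using polytope_eq_halfspaces_le_1[OF assms(1,2)] .
  obtain p q where pq: "p \<in> Y" "q \<in> Y" "p \<noteq> q" and e: "e = vcell Q Y p \<inter> vcell Q Y q"
    using assms(5) unfolding voronoi_edge_def by blast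
  \<comment> \<open>of the general position assumptions only the one on lines through two sites is needed\<close>
  interpret polygon_bisector A Q p q
    using assms(1,4) A pq(1-3) polytope_imp_bounded
    by unfold_locales (auto simp: general_position_def)
  from assms(6) show ?thesis
  proof
    assume adj: "adjacent_on_edge Q Y e w1 w2 \<and> x \<in> closed_segment w1 w2"
    then have "w1 \<noteq> w2" "closed_segment w1 w2 \<subseteq> e" by (auto simp: adjacent_on_edge_def)
    then show ?thesis
      using Qstar_at_subset_along_edge[OF pq(1,2), of "closed_segment w1 w2" w1 w2 x] adj
        connected_closed_segment_minus_endpoint[OF \<open>w1 \<noteq> w2\<close>]
      by (simp add: e)
  next
    assume "voronoi_vertex Q Y w1 \<and> voronoi_vertex Q Y w2 \<and> w1 \<noteq> w2 \<and>
      curve_endpoint e w1 \<and> curve_endpoint e w2 \<and> x \<in> e"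
    then show ?thesis
      using Qstar_at_subset_along_edge[OF pq(1,2), of e] by (auto simp: curve_endpoint_def e)
  qed
qed

end
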